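(* Let $q$ be an odd prime power, $P\in\mathbb{F}_q[T]$ monic irreducible and $\nu\ge1$. (1) If $\chi_q(P)=-1$, then $\#\mathcal{A}_q(P^\nu)=|P|^\nu\big(1-\frac{1}{|P|+1}\big)+\frac{|P|}{|P|+1}$ when $\nu$ is odd and $=|P|^\nu\big(1-\frac{1}{|P|+1}\big)+\frac{1}{|P|+1}$ when $\nu$ is even. (2) If $\chi_q(P)=0$, then $\#\mathcal{A}_q(P^\nu)=\frac{|P|^\nu+1}{2}$. (3) If $\chi_q(P)=1$, then $\#\mathcal{A}_q(P^\nu)=|P|^\nu$.
   Context: $|P|=q^{\deg P}$. $\chi_q(f)=0$ if $f(0)=0$, $1$ if $f(0)$ is a nonzero square in $\mathbb{F}_q$, $-1$ otherwise. $\mathcal{A}_q(P^\nu)=\{A^2+TB^2\bmod P^\nu:A,B\in\mathbb{F}_q[T]\}\subseteq\mathbb{F}_q[T]/(P^\nu)$. *)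

theory Defs
  imports "HOL-Computational_Algebra.Polynomial_Factorial" "HOL-Library.Cardinality"
begin

definition pnorm :: "'a::{field,finite} poly \<Rightarrow> nat" where
  "pnorm P = CARD('a) ^ degree P"

definition chiq :: "'a::field poly \<Rightarrow> int" where
  "chiq f = (if poly f 0 = 0 then 0
             else if (\<exists>x. x ^ 2 = poly f 0) then 1 else -1)"

text \<open>A_q(P^nu), residue classes mod P^nu represented by their canonical remainders.\<close>
definition Aq :: "'a::field poly \<Rightarrow> nat \<Rightarrow> 'a poly set" where
  "Aq P \<nu> = {(A ^ 2 + [:0, 1:] * B ^ 2) mod (P ^ \<nu>) | A B. True}"

end

theory Submission
  imports Defs "HOL-Algebra.Algebraic_Closure_Type"
begin

hide_const (open) Divisibility.irreducible Divisibility.prime up_ring.coeff up_ring.monom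
  Polynomials.degree Polynomials.lead_coeff module.smult Coset.order

section \<open>Finite fields\<close>

lemma mult_closed_power_card:
  fixes E :: "'b::field set"
  assumes fin: "finite E" and mult: "\<And>x y. x \<in> E \<Longrightarrow> y \<in> E \<Longrightarrow> x * y \<in> E"
    and x: "x \<in> E" "x \<noteq> 0"
  shows "x ^ card (E - {0}) = 1"
proof -
  let ?U = "E - {0}"
  have inj: "inj_on ((*) x) ?U"
    using x by (auto intro: inj_onI)
  have "(*) x ` ?U \<subseteq> ?U"
    using mult x by auto
  with inj fin have perm: "(*) x ` ?U = ?U"
    by (simp add: card_image card_subset_eq)
  have "\<Prod>?U = (\<Prod>y\<in>?U. x * y)"
    by (subst (1) perm[symmetric], subst prod.reindex[OF inj]) simp
  also have "\<dots> = x ^ card ?U * \<Prod>?U"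
    by (simp add: prod.distrib)
  finally show ?thesis
    using fin by simp
qed

lemma mult_closed_power_card_eq_self:
  fixes E :: "'b::field set"
  assumes fin: "finite E" and E0: "0 \<in> E" and mult: "\<And>x y. x \<in> E \<Longrightarrow> y \<in> E \<Longrightarrow> x * y \<in> E"
    and x: "x \<in> E"
  shows "x ^ card E = x"
proof -
  have card: "card E = Suc (card (E - {0}))"
    using card.remove[OF fin E0] .
  show ?thesis
  proof (cases "x = 0")
    case False
    thus ?thesis
      using mult_closed_power_card[OF fin mult x False] by (simp add: card)
  qed (simp add: card)
qed

lemma finite_field_power_card_eq_self:
  fixes x :: "'a::{field,finite}"
  shows "x ^ CARD('a) = x"
  by (rule mult_closed_power_card_eq_self) simp_all

lemma two_le_card_field: "2 \<le> CARD('a::{field,finite})"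
  using card_mono[of UNIV "{0::'a, 1}"] by simp

lemma card_prime_char_ring_extend:
  fixes H :: "'a::{ring_1,finite} set"
  assumes p: "prime CHAR('a)" and H0: "0 \<in> H" and Hadd: "\<And>a b. a \<in> H \<Longrightarrow> b \<in> H \<Longrightarrow> a + b \<in> H"
    and x: "x \<notin> H"
  obtains H' :: "'a set" where "0 \<in> H'" "\<And>a b. a \<in> H' \<Longrightarrow> b \<in> H' \<Longrightarrow> a + b \<in> H'"
    "card H' = CHAR('a) * card H"
proof -
  let ?p = "CHAR('a)"
  define H' where "H' = (\<lambda>(j, h). h + of_nat j * x) ` ({..<?p} \<times> H)"
  have Hmult: "of_nat n * h \<in> H" if "h \<in> H" for n h
    using that by (induction n) (auto simp: distrib_right H0 Hadd)
  have Hneg: "- h \<in> H" if "h \<in> H" for h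
  proof -
    have "(of_nat (?p - 1) :: 'a) = - 1"
      using prime_ge_1_nat[OF p] by simp
    thus ?thesis
      using Hmult[OF that, of "?p - 1"] by simp
  qed
  have no_multiple: "j = 0" if "j < ?p" "of_nat j * x \<in> H" for j
  proof (rule ccontr)
    assume "j \<noteq> 0"
    hence "coprime j ?p"
      using that p by (metis coprime_commute nat_dvd_not_less neq0_conv prime_imp_coprime)
    then obtain u v where "j * u = ?p * v + 1"
      using bezout_nat[of j ?p] \<open>j \<noteq> 0\<close> by auto
    hence "(of_nat u * of_nat j :: 'a) = 1"
      by (metis mult.commute of_nat_1 of_nat_CHAR of_nat_add of_nat_mult mult_zero_left add_0)
    hence "x = of_nat u * (of_nat j * x)"
      by (simp flip: mult.assoc)
    thus False
      using Hmult[OF that(2), of u] x by simp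
  qed
  have inj: "inj_on (\<lambda>(j, h). h + of_nat j * x) ({..<?p} \<times> H)"
  proof (rule inj_onI, clarify)
    fix j1 h1 j2 h2
    assume a: "j1 < ?p" "h1 \<in> H" "j2 < ?p" "h2 \<in> H" "h1 + of_nat j1 * x = h2 + of_nat j2 * x"
    have "j1 = j2" if "j1 \<le> j2" "h1 + of_nat j1 * x = h2 + of_nat j2 * x" "j2 < ?p" "h1 \<in> H" "h2 \<in> H"
      for j1 j2 h1 h2
    proof -
      have "of_nat (j2 - j1) * x = h1 + - h2"
        using that by (simp add: algebra_simps)
      moreover have "h1 + - h2 \<in> H"
        using that Hadd Hneg by blast
      ultimately have "j2 - j1 = 0"
        using no_multiple[of "j2 - j1"] that by simp
      thus ?thesis
        using that by simp
    qed
    from this[of j1 j2 h1 h2] this[of j2 j1 h2 h1] a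
    show "j1 = j2 \<and> h1 = h2"
      by (cases "j1 \<le> j2") auto
  qed
  have mem: "y \<in> H' \<longleftrightarrow> (\<exists>j h. j < ?p \<and> h \<in> H \<and> y = h + of_nat j * x)" for y
  proof
    assume "y \<in> H'"
    then obtain z where "z \<in> {..<?p} \<times> H" "y = (\<lambda>(j, h). h + of_nat j * x) z"
      unfolding H'_def by (rule imageE)
    thus "\<exists>j h. j < ?p \<and> h \<in> H \<and> y = h + of_nat j * x"
      by (cases z) auto
  next
    assume "\<exists>j h. j < ?p \<and> h \<in> H \<and> y = h + of_nat j * x"
    then obtain j h where "j < ?p" "h \<in> H" "y = h + of_nat j * x"
      by blast
    thus "y \<in> H'"
      unfolding H'_def by (intro image_eqI[where x = "(j, h)"]) auto
  qed
  have card: "card H' = ?p * card H"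
    unfolding H'_def by (simp add: card_image[OF inj] card_cartesian_product)
  have zero: "0 \<in> H'"
    using mem[of 0] H0 prime_gt_0_nat[OF p] by force
  have closed: "a + b \<in> H'" if ab: "a \<in> H'" "b \<in> H'" for a b
  proof -
    obtain j1 h1 where a: "h1 \<in> H" "a = h1 + of_nat j1 * x"
      using mem[of a] ab(1) by blast
    obtain j2 h2 where b: "h2 \<in> H" "b = h2 + of_nat j2 * x"
      using mem[of b] ab(2) by blast
    have "of_nat ((j1 + j2) mod ?p) = (of_nat (j1 + j2) :: 'a)"
      using of_nat_add[of "(j1 + j2) mod ?p" "?p * ((j1 + j2) div ?p)", where 'a = 'a] by simp
    hence "a + b = (h1 + h2) + of_nat ((j1 + j2) mod ?p) * x"
      using a b by (simp add: algebra_simps)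
    moreover have "(j1 + j2) mod ?p < ?p"
      using prime_gt_0_nat[OF p] by simp
    ultimately show "a + b \<in> H'"
      using mem Hadd[OF a(1) b(1)] by blast
  qed
  show ?thesis
    by (rule that[OF zero closed card])
qed

lemma card_prime_char_ring:
  assumes p: "prime CHAR('a::{ring_1,finite})"
  shows "\<exists>m. CARD('a) = CHAR('a) ^ m"
proof -
  have "\<exists>m. CARD('a) = CHAR('a) ^ m"
    if "0 \<in> H" "\<And>a b. a \<in> H \<Longrightarrow> b \<in> H \<Longrightarrow> a + b \<in> H" "card H = CHAR('a) ^ k"
    for H :: "'a set" and k
    using that
  proof (induction "CARD('a) - card H" arbitrary: H k rule: less_induct)
    case less
    show ?case
    proof (cases "H = UNIV")
      case False
      then obtain x where "x \<notin> H" by blast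
      then obtain H' :: "'a set" where H': "0 \<in> H'" "\<And>a b. a \<in> H' \<Longrightarrow> b \<in> H' \<Longrightarrow> a + b \<in> H'"
        "card H' = CHAR('a) * card H"
        using card_prime_char_ring_extend[OF p less.prems(1,2)] by blast
      have "card H < CARD('a)"
        using False by (simp add: psubset_card_mono psubsetI)
      moreover have "card H < card H'"
        using prime_gt_1_nat[OF p] card_gt_0_iff[of H] less.prems(1) H'(3) by auto
      moreover have "card H' \<le> CARD('a)"
        by (rule card_mono) auto
      ultimately have "CARD('a) - card H' < CARD('a) - card H"
        by linarith
      moreover have "card H' = CHAR('a) ^ Suc k"
        using H'(3) less.prems(3) by simp
      ultimately show ?thesis
        using less.hyps H'(1,2) by blast
    qed (use less.prems(3) in auto)
  qed
  from this[of "{0}" 0] show ?thesis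
    by simp
qed

lemma prime_CHAR_finite_field: "prime CHAR('a::{field,finite})"
  by (simp add: finite_imp_CHAR_pos prime_CHAR_semidom)

lemma finite_field_two_neq_zero:
  assumes "odd CARD('a::{field,finite})"
  shows "(2::'a) \<noteq> 0"
proof
  assume "(2::'a) = 0"
  hence "CHAR('a) dvd 2"
    using of_nat_eq_0_iff_char_dvd[of 2, where 'a = 'a] by simp
  hence "CHAR('a) = 2"
    using prime_CHAR_finite_field[where 'a = 'a] by (intro primes_dvd_imp_eq) auto
  moreover obtain m where "CARD('a) = CHAR('a) ^ m"
    using card_prime_char_ring[OF prime_CHAR_finite_field] by blast
  moreover have "m \<noteq> 0"
    using \<open>CARD('a) = CHAR('a) ^ m\<close> card_mono[of UNIV "{0::'a, 1}"] by (cases m) auto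
  ultimately show False
    using assms by simp
qed

lemma card_power_eq_power_le:
  assumes "m < n"
  shows "finite {x::'b::idom. x ^ n = x ^ m}" "card {x::'b::idom. x ^ n = x ^ m} \<le> n"
proof -
  define p :: "'b poly" where "p = monom 1 n + - monom 1 m"
  have "degree p = n"
    unfolding p_def using assms by (subst degree_add_eq_left) (simp_all add: degree_monom_eq)
  moreover have "p \<noteq> 0"
    using \<open>degree p = n\<close> assms by auto
  moreover have "{x. x ^ n = x ^ m} = {x. poly p x = 0}"
    by (simp add: p_def poly_monom)
  ultimately show "finite {x::'b. x ^ n = x ^ m}" "card {x::'b. x ^ n = x ^ m} \<le> n"
    using poly_roots_finite[of p] card_poly_roots_bound[of p] by simp_all
qed

lemma card_le_twice_card_squares:
  fixes U :: "'b::idom set"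
  assumes "finite U"
  shows "card U \<le> 2 * card ((\<lambda>y. y ^ 2) ` U)"
proof -
  have fiber: "card {y \<in> U. y ^ 2 = s} \<le> 2" for s
  proof -
    show ?thesis
    proof (cases "\<exists>y \<in> U. y ^ 2 = s")
      case True
      then obtain y where "y ^ 2 = s"
        by blast
      hence "{y \<in> U. y ^ 2 = s} \<subseteq> {y, - y}"
        by (auto simp: power2_eq_iff)
      hence "card {y \<in> U. y ^ 2 = s} \<le> card {y, - y}"
        by (rule card_mono[rotated]) simp
      also have "\<dots> \<le> 2"
        by (simp add: card_insert_if)
      finally show ?thesis .
    next
      case False
      hence "{y \<in> U. y ^ 2 = s} = {}"
        by blast
      thus ?thesis
        by (simp only: card.empty)
    qed
  qed
  have "card U = card (\<Union>s\<in>(\<lambda>y. y ^ 2) ` U. {y \<in> U. y ^ 2 = s})"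
    by (rule arg_cong[of _ _ card]) blast
  also have "\<dots> \<le> (\<Sum>s\<in>(\<lambda>y. y ^ 2) ` U. card {y \<in> U. y ^ 2 = s})"
    by (rule card_UN_le) (simp add: assms)
  also have "\<dots> \<le> 2 * card ((\<lambda>y. y ^ 2) ` U)"
    using sum_bounded_above[of "(\<lambda>y. y ^ 2) ` U" "\<lambda>s. card {y \<in> U. y ^ 2 = s}" 2] fiber
    by (simp add: mult.commute)
  finally show ?thesis .
qed

lemma mult_closed_squares:
  fixes E :: "'b::field set"
  assumes fin: "finite E" and E0: "0 \<in> E" and mult: "\<And>x y. x \<in> E \<Longrightarrow> y \<in> E \<Longrightarrow> x * y \<in> E"
    and odd: "odd (card E)"
  shows "(\<lambda>y. y ^ 2) ` (E - {0}) = {x \<in> E - {0}. x ^ (card E div 2) = 1}"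
    and "card ((\<lambda>y. y ^ 2) ` (E - {0})) = card E div 2"
proof -
  let ?k = "card E div 2"
  let ?SQ = "(\<lambda>y. y ^ 2) ` (E - {0})" and ?R = "{x \<in> E - {0}. x ^ ?k = 1}"
  have card_units: "card (E - {0}) = 2 * ?k"
    using fin E0 odd by (simp add: card_Diff_singleton)
  have "?SQ \<subseteq> ?R"
  proof
    fix s assume "s \<in> ?SQ"
    then obtain y where y: "y \<in> E" "y \<noteq> 0" and s: "s = y ^ 2"
      by auto
    have "s ^ ?k = 1"
      using mult_closed_power_card[OF fin mult y] card_units by (simp add: s flip: power_mult)
    moreover have "s \<in> E" "s \<noteq> 0"
      using mult[OF y(1) y(1)] y(2) by (simp_all add: s power2_eq_square)
    ultimately show "s \<in> ?R"
      by simp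
  qed
  moreover have "finite ?R"
    using fin by simp
  moreover have "card ?R \<le> ?k"
  proof (cases "?k = 0")
    case False
    have "card ?R \<le> card {x::'b. x ^ ?k = x ^ 0}"
      by (rule card_mono) (use card_power_eq_power_le(1)[of 0 ?k] False in auto)
    also have "\<dots> \<le> ?k"
      using False by (intro card_power_eq_power_le) simp
    finally show ?thesis .
  qed (use card_units fin in \<open>auto simp: card_eq_0_iff\<close>)
  moreover have "?k \<le> card ?SQ"
    using card_le_twice_card_squares[of "E - {0}"] fin card_units by simp
  ultimately have "card ?SQ = card ?R"
    using card_mono[of ?R ?SQ] by linarith
  with \<open>?SQ \<subseteq> ?R\<close> \<open>finite ?R\<close> show "?SQ = ?R"
    by (simp add: card_subset_eq)
  with \<open>card ?SQ = card ?R\<close> \<open>card ?R \<le> ?k\<close> \<open>?k \<le> card ?SQ\<close> show "card ?SQ = ?k"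
    by linarith
qed

lemma finite_subring_square_plus_times_square:
  fixes E :: "'b::field set"
  assumes fin: "finite E" and E0: "0 \<in> E" and mult: "\<And>x y. x \<in> E \<Longrightarrow> y \<in> E \<Longrightarrow> x * y \<in> E"
    and diff: "\<And>x y. x \<in> E \<Longrightarrow> y \<in> E \<Longrightarrow> x - y \<in> E"
    and odd: "odd (card E)" and t: "t \<in> E" "t \<noteq> 0" and c: "c \<in> E"
  obtains a b where "a \<in> E" "b \<in> E" "c = a ^ 2 + t * b ^ 2"
proof -
  define Sq where "Sq = (\<lambda>y. y ^ 2) ` E"
  define Lin where "Lin = (\<lambda>w. c - t * w) ` Sq"
  have "Sq = insert 0 ((\<lambda>y. y ^ 2) ` (E - {0}))"
    unfolding Sq_def using E0 by auto
  moreover have "0 \<notin> (\<lambda>y. y ^ 2) ` (E - {0})"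
    by auto
  ultimately have card_Sq: "card Sq = card E div 2 + 1"
    using mult_closed_squares(2)[OF fin E0 mult odd] fin by simp
  have "inj_on (\<lambda>w. c - t * w) Sq"
    using t(2) by (auto intro: inj_onI)
  hence card_Lin: "card Lin = card Sq"
    unfolding Lin_def by (rule card_image)
  have Sq_sub: "Sq \<subseteq> E"
    unfolding Sq_def using mult by (auto simp: power2_eq_square)
  hence Lin_sub: "Lin \<subseteq> E"
    unfolding Lin_def using mult diff t c by auto
  have "Sq \<inter> Lin \<noteq> {}"
  proof
    assume "Sq \<inter> Lin = {}"
    hence "card (Sq \<union> Lin) = card Sq + card Lin"
      using Sq_sub Lin_sub fin by (intro card_Un_disjoint) (auto intro: finite_subset)
    moreover have "card (Sq \<union> Lin) \<le> card E"
      using Sq_sub Lin_sub fin by (intro card_mono) auto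
    ultimately show False
      using card_Sq card_Lin odd by presburger
  qed
  then obtain a b where "a \<in> E" "b \<in> E" "a ^ 2 = c - t * b ^ 2"
    unfolding Sq_def Lin_def by auto
  thus ?thesis
    by (intro that[of a b]) (simp_all add: algebra_simps)
qed

lemma finite_field_square_iff:
  fixes c :: "'a::{field,finite}"
  assumes "odd CARD('a)" "c \<noteq> 0"
  shows "(\<exists>x. x ^ 2 = c) \<longleftrightarrow> c ^ (CARD('a) div 2) = 1"
proof -
  have "(\<exists>x. x ^ 2 = c) \<longleftrightarrow> c \<in> (\<lambda>y. y ^ 2) ` (UNIV - {0})"
    using assms(2) by auto
  also have "\<dots> \<longleftrightarrow> c ^ (CARD('a) div 2) = 1"
    using mult_closed_squares(1)[of "UNIV :: 'a set"] assms by simp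
  finally show ?thesis .
qed

lemma card_finite_field_nonzero_squares:
  assumes "odd CARD('a::{field,finite})"
  shows "card {c::'a. c \<noteq> 0 \<and> (\<exists>x. x ^ 2 = c)} = CARD('a) div 2"
proof -
  have "{c::'a. c \<noteq> 0 \<and> (\<exists>x. x ^ 2 = c)} = (\<lambda>y. y ^ 2) ` (UNIV - {0})"
    by auto
  thus ?thesis
    using mult_closed_squares(2)[of "UNIV :: 'a set"] assms by simp
qed

lemma geometric_sum_nat:
  assumes "0 < (q::nat)"
  shows "(q - 1) * (\<Sum>i<d. q ^ i) = q ^ d - 1"
proof -
  have "int ((q - 1) * (\<Sum>i<d. q ^ i)) = int q ^ d - 1"
    using power_diff_1_eq[of "int q" d] assms by simp
  also have "\<dots> = int (q ^ d - 1)"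
    using assms by simp
  finally show ?thesis
    by (simp only: of_nat_eq_iff)
qed

section \<open>Frobenius on the algebraic closure\<close>

lemma map_poly_to_ac_add: "map_poly to_ac (p + q) = map_poly to_ac p + map_poly (to_ac :: 'a::field \<Rightarrow> _) q"
  by (rule poly_eqI) (simp add: coeff_map_poly)

lemma map_poly_to_ac_diff: "map_poly to_ac (p - q) = map_poly to_ac p - map_poly (to_ac :: 'a::field \<Rightarrow> _) q"
  by (rule poly_eqI) (simp add: coeff_map_poly)

lemma map_poly_to_ac_mult: "map_poly to_ac (p * q) = map_poly to_ac p * map_poly (to_ac :: 'a::field \<Rightarrow> _) q"
  by (rule poly_eqI) (simp add: coeff_map_poly coeff_mult to_ac_sum)

lemma map_poly_to_ac_power: "map_poly to_ac (p ^ n) = map_poly (to_ac :: 'a::field \<Rightarrow> _) p ^ n"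
  by (induction n) (simp_all add: map_poly_to_ac_mult)

lemma alg_closure_power_card_sum:
  fixes f :: "'b \<Rightarrow> 'a::{field,finite} alg_closure"
  shows "(\<Sum>i\<in>A. f i) ^ CARD('a) = (\<Sum>i\<in>A. f i ^ CARD('a))"
proof -
  obtain m where "CARD('a) = CHAR('a) ^ m"
    using card_prime_char_ring[OF prime_CHAR_finite_field] by blast
  thus ?thesis
    by (intro freshmans_dream_sum') (simp_all add: prime_CHAR_finite_field)
qed

lemma poly_map_to_ac_power_card:
  fixes f :: "'a::{field,finite} poly"
  shows "poly (map_poly to_ac f) y ^ CARD('a) = poly (map_poly to_ac f) (y ^ CARD('a))"
proof -
  have "to_ac (coeff f i) ^ CARD('a) = to_ac (coeff f i)" for i
    by (simp flip: to_ac_power add: finite_field_power_card_eq_self)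
  thus ?thesis
    by (simp add: poly_altdef alg_closure_power_card_sum power_mult_distrib coeff_map_poly
        degree_map_poly flip: power_mult add: mult.commute[of _ "CARD('a)"])
qed

lemma poly_map_to_ac_power_card_power:
  fixes f :: "'a::{field,finite} poly"
  shows "poly (map_poly to_ac f) y ^ (CARD('a) ^ i) = poly (map_poly to_ac f) (y ^ (CARD('a) ^ i))"
proof (induction i)
  case (Suc i)
  thus ?case
    using poly_map_to_ac_power_card[of f "y ^ (CARD('a) ^ i)"]
    by (simp add: power_mult mult.commute[of "CARD('a)"])
qed simp

section \<open>Residues of polynomials\<close>

definition polys_deg_less :: "nat \<Rightarrow> 'a::zero poly set" where
  "polys_deg_less n = {f. \<forall>i\<ge>n. coeff f i = 0}"

lemma polys_deg_less_iff: "f \<in> polys_deg_less n \<longleftrightarrow> f = 0 \<or> degree f < n"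
proof
  assume f: "f \<in> polys_deg_less n"
  show "f = 0 \<or> degree f < n"
  proof (rule ccontr)
    assume "\<not> (f = 0 \<or> degree f < n)"
    hence "coeff f (degree f) \<noteq> 0" "n \<le> degree f"
      by auto
    with f show False
      by (simp add: polys_deg_less_def)
  qed
qed (auto simp: polys_deg_less_def coeff_eq_0)

lemma polys_deg_less_0 [simp]: "polys_deg_less 0 = {0}"
  by (auto simp: polys_deg_less_iff)

lemma polys_deg_less_Suc_coeff_0:
  "{f \<in> polys_deg_less (Suc n). coeff f 0 \<in> S} = (\<lambda>(a, g). pCons a g) ` (S \<times> polys_deg_less n)"
proof (intro equalityI subsetI)
  fix f :: "'a poly"
  assume "f \<in> {f \<in> polys_deg_less (Suc n). coeff f 0 \<in> S}"
  moreover obtain a g where "f = pCons a g"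
    by (cases f)
  ultimately show "f \<in> (\<lambda>(a, g). pCons a g) ` (S \<times> polys_deg_less n)"
    by (force simp: polys_deg_less_def coeff_pCons split: nat.splits)
qed (auto simp: polys_deg_less_def coeff_pCons split: nat.splits)

lemma card_polys_deg_less_Suc_coeff_0:
  fixes S :: "'a::zero set"
  shows "card {f \<in> polys_deg_less (Suc n). coeff f 0 \<in> S} = card S * card (polys_deg_less n :: 'a::zero poly set)"
proof -
  have "inj_on (\<lambda>(a, g). pCons a g) (S \<times> (polys_deg_less n :: 'a poly set))"
    by (auto intro: inj_onI)
  thus ?thesis
    by (simp add: polys_deg_less_Suc_coeff_0 card_image card_cartesian_product)
qed

lemma card_polys_deg_less: "card (polys_deg_less n :: 'a::{zero,finite} poly set) = CARD('a) ^ n"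
proof (induction n)
  case (Suc n)
  thus ?case
    using card_polys_deg_less_Suc_coeff_0[of n "UNIV :: 'a set"] by simp
qed simp

lemma finite_polys_deg_less [simp]: "finite (polys_deg_less n :: 'a::{zero,finite} poly set)"
  by (rule card_ge_0_finite) (simp add: card_polys_deg_less)

lemma mod_in_polys_deg_less: "M \<noteq> 0 \<Longrightarrow> f mod M \<in> polys_deg_less (degree M)"
  for f M :: "'a::field poly"
  using degree_mod_less[of M f] by (auto simp: polys_deg_less_iff)

lemma mod_polys_deg_less_eq: "f \<in> polys_deg_less (degree M) \<Longrightarrow> f mod M = f"
  for f M :: "'a::field poly"
  by (cases "M = 0") (auto simp: polys_deg_less_iff mod_poly_less)

lemma polys_deg_less_multiples:
  fixes P :: "'a::field poly"
  assumes "P \<noteq> 0"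
  shows "{f \<in> polys_deg_less (degree P + n). P dvd f} = (\<lambda>g. P * g) ` polys_deg_less n"
proof (intro equalityI subsetI)
  fix f assume "f \<in> {f \<in> polys_deg_less (degree P + n). P dvd f}"
  then obtain g where "f \<in> polys_deg_less (degree P + n)" "f = P * g"
    by blast
  thus "f \<in> (\<lambda>g. P * g) ` polys_deg_less n"
    using assms by (cases "g = 0") (auto simp: polys_deg_less_iff degree_mult_eq)
next
  fix f assume "f \<in> (\<lambda>g. P * g) ` polys_deg_less n"
  then obtain g where "g \<in> polys_deg_less n" "f = P * g"
    by blast
  thus "f \<in> {f \<in> polys_deg_less (degree P + n). P dvd f}"
    using assms by (cases "g = 0") (auto simp: polys_deg_less_iff degree_mult_eq)
qed

lemma poly_mod_eq_at_root:
  fixes g M :: "'a::field poly"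
  assumes "poly M x = 0"
  shows "poly (g mod M) x = poly g x"
proof -
  have "poly g x = poly (g div M) x * poly M x + poly (g mod M) x"
    by (metis div_mult_mod_eq poly_add poly_mult)
  with assms show ?thesis
    by simp
qed

section \<open>Congruences\<close>

lemma inverse_mod_power:
  fixes P x w :: "'a::comm_ring_1"
  assumes "P dvd x * w - 1"
  obtains w' where "P ^ n dvd x * w' - 1"
proof -
  define e where "e = 1 - x * w"
  have "P dvd e"
    using assms unfolding e_def by (metis dvd_minus_iff minus_diff_eq)
  hence "P ^ n dvd - (e ^ n)"
    by (simp add: dvd_power_same)
  moreover have "x * (w * (\<Sum>i<n. e ^ i)) - 1 = - (e ^ n)"
    using one_diff_power_eq[of e n] unfolding e_def by (simp add: algebra_simps)
  ultimately show ?thesis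
    by (intro that[of "w * (\<Sum>i<n. e ^ i)"]) simp
qed

lemma square_root_lift:
  fixes P u a w :: "'a::comm_ring_1"
  assumes inv: "P dvd 2 * a * w - 1" and root: "P dvd u - a ^ 2"
  obtains A where "P ^ n dvd u - A ^ 2" "P dvd A - a"
proof -
  have "\<exists>A. P ^ n dvd u - A ^ 2 \<and> P dvd A - a"
  proof (induction n)
    case 0
    show ?case
      by (intro exI[of _ a]) simp
  next
    case (Suc n)
    then obtain A where A: "P ^ n dvd u - A ^ 2" and Aa: "P dvd A - a"
      by blast
    from A obtain k where k: "u - A ^ 2 = P ^ n * k"
      by (rule dvdE)
    show ?case
    proof (cases "n = 0")
      case True
      have eq: "u - A ^ 2 = (u - a ^ 2) - (A - a) * (A + a)"
        by (simp add: algebra_simps power2_eq_square)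
      have "P dvd (u - a ^ 2) - (A - a) * (A + a)"
        using root Aa by simp
      hence "P dvd u - A ^ 2"
        unfolding eq .
      with True Aa show ?thesis
        by auto
    next
      case False
      define A' where "A' = A + P ^ n * (k * w)"
      have "P dvd 2 * A * w - 1"
        using inv Aa dvd_add[OF inv dvd_mult2[OF dvd_mult[OF Aa, of 2], of w]]
        by (simp add: algebra_simps)
      hence "P ^ Suc n dvd P ^ n * k * (2 * A * w - 1)"
        unfolding power_Suc2 by (intro mult_dvd_mono) simp_all
      moreover have "P ^ Suc n dvd P ^ (2 * n) * (k * w) ^ 2"
        using False by (intro dvd_mult2 le_imp_power_dvd) simp
      moreover have "u - A' ^ 2 = - (P ^ n * k * (2 * A * w - 1)) - P ^ (2 * n) * (k * w) ^ 2"
      proof -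
        have "u = A ^ 2 + P ^ n * k" "P ^ (2 * n) = P ^ n * P ^ n"
          using k by (simp_all add: algebra_simps mult_2_right flip: power_add)
        thus ?thesis
          unfolding A'_def by (simp add: algebra_simps power2_eq_square)
      qed
      ultimately have "P ^ Suc n dvd u - A' ^ 2"
        by simp
      moreover have "P dvd A' - a"
      proof -
        have eq: "A' - a = (A - a) + P ^ n * (k * w)"
          unfolding A'_def by (simp add: algebra_simps)
        have "P dvd P ^ n"
          using False by simp
        hence "P dvd (A - a) + P ^ n * (k * w)"
          using Aa by simp
        thus ?thesis
          unfolding eq .
      qed
      ultimately show ?thesis
        by blast
    qed
  qed
  with that show ?thesis
    by blast
qed

lemma square_plus_times_square_mod:
  fixes N t s w v f :: "'a::comm_ring_1"
  assumes root: "N dvd - t - s ^ 2" and s_inv: "N dvd s * w - 1" and two_inv: "N dvd 2 * v - 1"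
  obtains x y where "N dvd f - (x ^ 2 + t * y ^ 2)"
proof -
  define h where "h = v * (1 - f)"
  define x where "x = v * (f + 1)"
  define y where "y = w * h"
  have x2: "x ^ 2 = h ^ 2 + (2 * v) ^ 2 * f"
    unfolding x_def h_def by (simp add: algebra_simps power2_eq_square)
  have ty2: "t * y ^ 2 = h ^ 2 * w ^ 2 * (t + s ^ 2) - h ^ 2 * ((s * w - 1) * (s * w + 1)) - h ^ 2"
    unfolding y_def by (simp add: algebra_simps power2_eq_square)
  have "f - (x ^ 2 + t * y ^ 2) =
      - (f * ((2 * v - 1) * (2 * v + 1))) - h ^ 2 * w ^ 2 * (t + s ^ 2) + h ^ 2 * ((s * w - 1) * (s * w + 1))"
    unfolding x2 ty2 by (simp add: algebra_simps power2_eq_square)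
  also have "N dvd \<dots>"
  proof -
    have "N dvd - (- t - s ^ 2)"
      using root by (simp only: dvd_minus_iff)
    hence "N dvd t + s ^ 2"
      by (simp add: add.commute)
    thus ?thesis
      using s_inv two_inv by simp
  qed
  finally show ?thesis
    by (rule that)
qed

lemma exists_inverse_mod_irreducible:
  fixes P x :: "'a::{field,finite} poly"
  assumes P: "irreducible P" and x: "\<not> P dvd x"
  obtains w where "P dvd x * w - 1"
proof -
  let ?D = "polys_deg_less (degree P) :: 'a poly set"
  have P0: "P \<noteq> 0"
    using P by auto
  have zero: "g = 0" if "g \<in> ?D" "P dvd g" for g
    using mod_polys_deg_less_eq[OF that(1)] that(2) by simp
  have "inj_on (\<lambda>g. (x * g) mod P) ?D"
  proof (rule inj_onI)
    fix g h assume gh: "g \<in> ?D" "h \<in> ?D" "(x * g) mod P = (x * h) mod P"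
    hence "P dvd x * (g - h)"
      by (simp add: mod_eq_dvd_iff algebra_simps)
    hence "P dvd g - h"
      using P x field_poly_irreducible_imp_prime prime_elem_dvd_mult_iff by blast
    moreover have "g - h \<in> ?D"
      using gh by (auto simp: polys_deg_less_def)
    ultimately show "g = h"
      using zero[of "g - h"] by simp
  qed
  moreover have "(\<lambda>g. (x * g) mod P) ` ?D \<subseteq> ?D"
    using mod_in_polys_deg_less[OF P0] by auto
  ultimately have "(\<lambda>g. (x * g) mod P) ` ?D = ?D"
    by (simp add: card_image card_subset_eq)
  moreover have "1 mod P \<in> ?D"
    by (rule mod_in_polys_deg_less[OF P0])
  ultimately have "1 mod P \<in> (\<lambda>g. (x * g) mod P) ` ?D"
    by simp
  then obtain w where "1 mod P = (x * w) mod P"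
    by (rule imageE)
  thus ?thesis
    by (intro that[of w]) (simp add: mod_eq_dvd_iff dvd_diff_commute)
qed

lemma square_lift_mod_irreducible:
  fixes P u a :: "'a::{field,finite} poly"
  assumes P: "irreducible P" and two: "(2::'a) \<noteq> 0" and root: "P dvd u - a ^ 2" and a: "\<not> P dvd a"
  obtains A where "P ^ n dvd u - A ^ 2" "\<not> P dvd A"
proof -
  have "is_unit (2 :: 'a poly)"
    using two by (simp add: is_unit_const_poly_iff numeral_poly dvd_field_iff)
  hence "\<not> P dvd 2"
    using P irreducible_not_unit unit_imp_dvd dvd_unit_imp_unit by blast
  hence "\<not> P dvd 2 * a"
    using P a field_poly_irreducible_imp_prime prime_elem_dvd_mult_iff by blast
  then obtain w where "P dvd 2 * a * w - 1"
    using exists_inverse_mod_irreducible[OF P] by blast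
  then obtain A where A: "P ^ n dvd u - A ^ 2" "P dvd A - a"
    using square_root_lift[OF _ root] by blast
  have "\<not> P dvd A"
  proof
    assume "P dvd A"
    hence "P dvd A - (A - a)"
      using A(2) by (rule dvd_diff)
    thus False
      using a by simp
  qed
  with A(1) show ?thesis
    by (rule that)
qed

lemma irreducible_dvd_X_imp_poly_0:
  fixes P :: "'a::field poly"
  assumes P: "irreducible P" and "P dvd [:0, 1:]"
  shows "poly P 0 = 0"
proof -
  obtain k where k: "[:0, 1:] = P * k"
    using assms(2) by (rule dvdE)
  have "irreducible ([:0, 1:] :: 'a poly)"
    by (rule irreducible_linear_field_poly) simp
  hence "is_unit k"
    using Factorial_Ring.irreducibleD[OF _ k] P irreducible_not_unit by blast
  hence "[:0, 1:] dvd P"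
    by (simp add: k)
  thus ?thesis
    by (simp add: dvd_iff_poly_eq_0)
qed

lemma irreducible_poly_0_eq_X:
  fixes P :: "'a::field poly"
  assumes P: "irreducible P" and monic: "lead_coeff P = 1" and P0: "poly P 0 = 0"
  shows "P = [:0, 1:]"
proof -
  have "[:0, 1:] dvd P"
    using P0 by (simp add: dvd_iff_poly_eq_0)
  then obtain j where j: "P = [:0, 1:] * j"
    by (rule dvdE)
  have "is_unit j"
    using Factorial_Ring.irreducibleD[OF P j] by (auto simp: is_unit_iff_degree)
  then obtain c where "j = [:c:]"
    by (auto simp: is_unit_poly_iff)
  with j monic show ?thesis
    by (cases "c = 0") (simp_all add: one_pCons)
qed

section \<open>The residue field inside the algebraic closure\<close>

locale residue_root =
  fixes P :: "'a::{field,finite} poly" and r :: "'a alg_closure"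
  assumes irreducible_P: "irreducible P" and monic_P: "lead_coeff P = 1"
    and root_r: "poly (map_poly to_ac P) r = 0"
begin

definition ev :: "'a poly \<Rightarrow> 'a alg_closure" where
  "ev f = poly (map_poly to_ac f) r"

lemma ev_add [simp]: "ev (f + g) = ev f + ev g"
  by (simp add: ev_def map_poly_to_ac_add)

lemma ev_diff [simp]: "ev (f - g) = ev f - ev g"
  by (simp add: ev_def map_poly_to_ac_diff)

lemma ev_mult [simp]: "ev (f * g) = ev f * ev g"
  by (simp add: ev_def map_poly_to_ac_mult)

lemma ev_power [simp]: "ev (f ^ n) = ev f ^ n"
  by (simp add: ev_def map_poly_to_ac_power)

lemma ev_0 [simp]: "ev 0 = 0" and ev_1 [simp]: "ev 1 = 1" and ev_X [simp]: "ev [:0, 1:] = r"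
  by (simp_all add: ev_def map_poly_pCons)

lemma ev_P [simp]: "ev P = 0"
  by (simp add: ev_def root_r)

lemma ev_eq_0_iff: "ev g = 0 \<longleftrightarrow> P dvd g"
proof
  assume "ev g = 0"
  show "P dvd g"
  proof (rule ccontr)
    assume "\<not> P dvd g"
    then obtain w where "P dvd g * w - 1"
      by (rule exists_inverse_mod_irreducible[OF irreducible_P])
    then obtain k where "g * w - 1 = P * k"
      by (rule dvdE)
    hence "ev g * ev w - 1 = 0"
      by (metis ev_1 ev_P ev_diff ev_mult mult_zero_left)
    thus False
      using \<open>ev g = 0\<close> by simp
  qed
qed auto

lemma ev_mod [simp]: "ev (g mod P) = ev g"
  using ev_eq_0_iff[of "g - g mod P"] by (simp add: mod_eq_dvd_iff)

lemma range_ev: "range ev = ev ` polys_deg_less (degree P)"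
proof -
  have "ev g \<in> ev ` polys_deg_less (degree P)" for g
    using mod_in_polys_deg_less[of P g] monic_P by (metis ev_mod image_eqI leading_coeff_0_iff one_neq_zero)
  thus ?thesis
    by auto
qed

lemma inj_on_ev: "inj_on ev (polys_deg_less (degree P))"
proof (rule inj_onI)
  fix f g assume fg: "f \<in> polys_deg_less (degree P)" "g \<in> polys_deg_less (degree P)" "ev f = ev g"
  hence "P dvd f - g"
    by (simp flip: ev_eq_0_iff)
  moreover have "f - g \<in> polys_deg_less (degree P)"
    using fg by (auto simp: polys_deg_less_def)
  ultimately show "f = g"
    using mod_polys_deg_less_eq[of "f - g" P] by simp
qed

lemma finite_range_ev: "finite (range ev)"
  by (simp add: range_ev)

lemma card_range_ev: "card (range ev) = CARD('a) ^ degree P"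
  by (simp add: range_ev card_image[OF inj_on_ev] card_polys_deg_less)

lemma range_ev_mult: "x \<in> range ev \<Longrightarrow> y \<in> range ev \<Longrightarrow> x * y \<in> range ev"
  by (auto simp flip: ev_mult)

lemma range_ev_diff: "x \<in> range ev \<Longrightarrow> y \<in> range ev \<Longrightarrow> x - y \<in> range ev"
  by (auto simp flip: ev_diff)

lemma zero_in_range_ev: "0 \<in> range ev"
  by (metis ev_0 rangeI)

lemma power_card_degree_eq_self:
  assumes "y \<in> range ev"
  shows "y ^ (CARD('a) ^ degree P) = y"
  using mult_closed_power_card_eq_self[OF finite_range_ev zero_in_range_ev range_ev_mult assms]
  by (simp add: card_range_ev)

lemma odd_card_range_ev: "odd CARD('a) \<Longrightarrow> odd (card (range ev))"
  by (simp add: card_range_ev)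

lemma ev_power_card_power: "ev f ^ (CARD('a) ^ i) = poly (map_poly to_ac f) (r ^ (CARD('a) ^ i))"
  unfolding ev_def by (rule poly_map_to_ac_power_card_power)

lemma conjugate_root: "poly (map_poly to_ac P) (r ^ (CARD('a) ^ i)) = 0"
  using ev_power_card_power[of P i] by (simp add: power_0_left)

lemma conjugates_distinct: "inj_on (\<lambda>i. r ^ (CARD('a) ^ i)) {..<degree P}"
proof -
  let ?q = "CARD('a)"
  have period: "r ^ (?q ^ k) \<noteq> r" if k: "0 < k" "k < degree P" for k
  proof
    assume fix_r: "r ^ (?q ^ k) = r"
    have "1 < ?q ^ k"
      using two_le_card_field[where 'a = 'a] k(1) by (intro one_less_power) auto
    have "range ev \<subseteq> {y. y ^ (?q ^ k) = y ^ 1}"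
      using ev_power_card_power fix_r by (auto simp: ev_def)
    hence "card (range ev) \<le> card {y :: 'a alg_closure. y ^ (?q ^ k) = y ^ 1}"
      by (intro card_mono card_power_eq_power_le(1)[OF \<open>1 < ?q ^ k\<close>])
    also have "\<dots> \<le> ?q ^ k"
      by (rule card_power_eq_power_le(2)[OF \<open>1 < ?q ^ k\<close>])
    finally have "card (range ev) \<le> ?q ^ k" .
    moreover have "?q ^ k < ?q ^ degree P"
      using two_le_card_field[where 'a = 'a] k(2) by (simp add: power_strict_increasing)
    ultimately show False
      by (simp add: card_range_ev)
  qed
  have r_fix: "r ^ (?q ^ degree P) = r"
    using power_card_degree_eq_self[of r] by (metis ev_X rangeI)
  show ?thesis
  proof (rule inj_onI)
    fix i j assume ij: "i \<in> {..<degree P}" "j \<in> {..<degree P}" "r ^ (?q ^ i) = r ^ (?q ^ j)"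
    have "i = j" if "i < j" "j < degree P" "r ^ (?q ^ i) = r ^ (?q ^ j)" for i j
    proof -
      define m where "m = i + (degree P - j)"
      have "0 < m" "m < degree P"
        unfolding m_def using that(1,2) by linarith+
      have "r ^ (?q ^ m) = (r ^ (?q ^ i)) ^ (?q ^ (degree P - j))"
        unfolding m_def by (simp add: power_add power_mult)
      also have "\<dots> = r ^ (?q ^ (j + (degree P - j)))"
        unfolding that(3) by (simp add: power_add power_mult)
      also have "\<dots> = r"
        using that(2) r_fix by simp
      finally show ?thesis
        using period[OF \<open>0 < m\<close> \<open>m < degree P\<close>] by blast
    qed
    from this[of i j] this[of j i] ij show "i = j"
      by (cases i j rule: linorder_cases) auto
  qed
qed

lemma to_ac_poly_P_0:
  assumes "odd CARD('a)"
  shows "to_ac (poly P 0) = (- r) ^ (\<Sum>i<degree P. CARD('a) ^ i)"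
proof -
  let ?P = "map_poly to_ac P" and ?\<rho> = "\<lambda>i. r ^ (CARD('a) ^ i)"
  let ?R = "?\<rho> ` {..<degree P}"
  have lc: "lead_coeff ?P = 1" and deg: "degree ?P = degree P"
    using monic_P by (simp_all add: degree_map_poly coeff_map_poly)
  then obtain A where "size A = degree P" and A: "?P = (\<Prod>x\<in>#A. [:- x, 1:])"
    using alg_closed_imp_factorization[of ?P] by force
  have "?R \<subseteq> set_mset A"
  proof
    fix x assume "x \<in> ?R"
    hence "(\<Prod>a\<in>#A. x - a) = 0"
      using conjugate_root by (auto simp: A poly_prod_mset)
    thus "x \<in># A"
      by auto
  qed
  hence "mset_set ?R \<subseteq># mset_set (set_mset A)"
    by (rule subset_imp_msubset_mset_set) simp
  also have "\<dots> \<subseteq># A"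
    by (rule mset_set_set_mset_msubset)
  finally have sub: "mset_set ?R \<subseteq># A" .
  have "size (mset_set ?R) = size A"
    using \<open>size A = degree P\<close> card_image[OF conjugates_distinct] by simp
  hence "\<not> mset_set ?R \<subset># A"
    using mset_subset_size by fastforce
  hence "A = mset_set ?R"
    using sub by (simp add: subset_mset.le_less)
  hence "poly ?P 0 = (\<Prod>i<degree P. - ?\<rho> i)"
    by (simp add: A poly_prod prod_unfold_prod_mset[symmetric] prod.reindex[OF conjugates_distinct])
  also have "\<dots> = (\<Prod>i<degree P. (- r) ^ (CARD('a) ^ i))"
    using assms by simp
  also have "\<dots> = (- r) ^ (\<Sum>i<degree P. CARD('a) ^ i)"
    by (simp add: power_sum)
  finally show ?thesis
    by (simp add: poly_0_coeff_0 coeff_map_poly)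
qed

lemma r_neq_0:
  assumes "poly P 0 \<noteq> 0"
  shows "r \<noteq> 0"
proof
  assume "r = 0"
  hence "to_ac (poly P 0) = 0"
    using root_r by (simp add: poly_0_coeff_0 coeff_map_poly)
  with assms show False
    by simp
qed

lemma minus_X_square_mod_iff:
  assumes q: "odd CARD('a)" and P0: "poly P 0 \<noteq> 0"
  shows "(\<exists>s. P dvd s ^ 2 + [:0, 1:]) \<longleftrightarrow> (\<exists>x. x ^ 2 = poly P 0)"
proof -
  let ?q = "CARD('a)"
  let ?S = "\<Sum>i<degree P. ?q ^ i"
  have "ev (- [:0, 1:]) = - r"
    using ev_diff[of 0 "[:0, 1:]"] by simp
  hence r: "- r \<in> range ev - {0}"
    using r_neq_0[OF P0] by (metis DiffI neg_equal_0_iff_equal rangeI singletonD)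
  have "card (range ev) div 2 = ?S * (?q div 2)"
  proof -
    have "(?q - 1) * ?S = card (range ev) - 1"
      using geometric_sum_nat[of ?q "degree P"] by (simp add: card_range_ev)
    moreover have "?q - 1 = 2 * (?q div 2)" "card (range ev) - 1 = 2 * (card (range ev) div 2)"
      using q odd_card_range_ev[OF q] by simp_all
    ultimately show ?thesis
      by (simp add: mult.commute)
  qed
  hence norm: "(- r) ^ (card (range ev) div 2) = to_ac (poly P 0 ^ (?q div 2))"
    using to_ac_poly_P_0[OF q] by (simp add: power_mult)
  have "(\<exists>s. P dvd s ^ 2 + [:0, 1:]) \<longleftrightarrow> (\<exists>y \<in> range ev. y ^ 2 = - r)"
    by (auto simp flip: ev_eq_0_iff simp: eq_neg_iff_add_eq_0)
  also have "\<dots> \<longleftrightarrow> - r \<in> (\<lambda>y. y ^ 2) ` (range ev - {0})"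
  proof
    assume "\<exists>y \<in> range ev. y ^ 2 = - r"
    then obtain y where y: "y \<in> range ev" "y ^ 2 = - r"
      by blast
    moreover have "y \<noteq> 0"
      using y(2) r by auto
    ultimately show "- r \<in> (\<lambda>y. y ^ 2) ` (range ev - {0})"
      by (intro image_eqI[where x = y]) auto
  qed auto
  also have "\<dots> \<longleftrightarrow> (- r) ^ (card (range ev) div 2) = 1"
    using mult_closed_squares(1)[OF finite_range_ev zero_in_range_ev range_ev_mult odd_card_range_ev[OF q]] r
    by simp
  also have "\<dots> \<longleftrightarrow> poly P 0 ^ (?q div 2) = 1"
    by (simp add: norm del: to_ac_power)
  also have "\<dots> \<longleftrightarrow> (\<exists>x. x ^ 2 = poly P 0)"
    using finite_field_square_iff[OF q P0] by simp
  finally show ?thesis .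
qed

lemma square_plus_X_times_square_mod:
  assumes q: "odd CARD('a)" and P0: "poly P 0 \<noteq> 0"
  obtains a b where "P dvd c - (a ^ 2 + [:0, 1:] * b ^ 2)"
proof -
  obtain a' b' where ab': "a' \<in> range ev" "b' \<in> range ev" and c: "ev c = a' ^ 2 + r * b' ^ 2"
    using finite_subring_square_plus_times_square[OF finite_range_ev zero_in_range_ev range_ev_mult
        range_ev_diff odd_card_range_ev[OF q] _ r_neq_0[OF P0], of "ev c"]
    by (metis ev_X rangeI)
  obtain a b where "a' = ev a" "b' = ev b"
    using ab' by blast
  hence "ev (c - (a ^ 2 + [:0, 1:] * b ^ 2)) = ev c - (a' ^ 2 + r * b' ^ 2)"
    by (simp only: ev_diff ev_add ev_mult ev_power ev_X)
  thus ?thesis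
    by (intro that[of a b]) (simp add: c flip: ev_eq_0_iff)
qed

end

lemma residue_root_exists:
  fixes P :: "'a::{field,finite} poly"
  assumes "irreducible P" "lead_coeff P = 1"
  obtains r where "residue_root P r"
proof -
  have "degree P > 0"
    using assms by (metis irreducible_not_unit is_unit_iff_degree leading_coeff_0_iff neq0_conv one_neq_zero)
  hence "degree (map_poly to_ac P) > 0"
    by (simp add: degree_map_poly)
  then obtain r where "poly (map_poly to_ac P) r = 0"
    using alg_closed_imp_poly_has_root by blast
  with assms show ?thesis
    by (intro that[of r]) (unfold_locales)
qed

lemma minus_X_square_mod_irreducible_iff:
  fixes P :: "'a::{field,finite} poly"
  assumes "odd CARD('a)" "irreducible P" "lead_coeff P = 1" "poly P 0 \<noteq> 0"
  shows "(\<exists>s. P dvd s ^ 2 + [:0, 1:]) \<longleftrightarrow> (\<exists>x. x ^ 2 = poly P 0)"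
  using residue_root_exists[OF assms(2,3)] residue_root.minus_X_square_mod_iff[OF _ assms(1,4)] by metis

lemma square_plus_X_times_square_mod_irreducible:
  fixes P c :: "'a::{field,finite} poly"
  assumes "odd CARD('a)" "irreducible P" "lead_coeff P = 1" "poly P 0 \<noteq> 0"
  obtains a b where "P dvd c - (a ^ 2 + [:0, 1:] * b ^ 2)"
  using residue_root_exists[OF assms(2,3)] residue_root.square_plus_X_times_square_mod[OF _ assms(1,4)]
  by metis

section \<open>The sets \<open>Aq\<close>\<close>

lemma Aq_subset:
  fixes P :: "'a::field poly"
  assumes "P \<noteq> 0"
  shows "Aq P \<nu> \<subseteq> polys_deg_less (degree P * \<nu>)"
  using mod_in_polys_deg_less[of "P ^ \<nu>"] assms by (auto simp: Aq_def degree_power_eq mult.commute)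

lemma Aq_memI:
  fixes P :: "'a::field poly"
  assumes "P \<noteq> 0" "f \<in> polys_deg_less (degree P * \<nu>)" "P ^ \<nu> dvd f - (A ^ 2 + [:0, 1:] * B ^ 2)"
  shows "f \<in> Aq P \<nu>"
proof -
  have "f = f mod P ^ \<nu>"
    using assms(1,2) mod_polys_deg_less_eq[of f "P ^ \<nu>"] by (simp add: degree_power_eq mult.commute)
  also have "\<dots> = (A ^ 2 + [:0, 1:] * B ^ 2) mod P ^ \<nu>"
    using assms(3) by (simp add: mod_eq_dvd_iff)
  finally show ?thesis
    unfolding Aq_def by blast
qed

lemma finite_Aq:
  fixes P :: "'a::{field,finite} poly"
  assumes "P \<noteq> 0"
  shows "finite (Aq P \<nu>)"
  using Aq_subset[OF assms] by (rule finite_subset) simp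

lemma Aq_0 [simp]: "Aq P 0 = {0}"
  unfolding Aq_def by auto

lemma zero_in_Aq: "0 \<in> Aq P \<nu>"
  unfolding Aq_def by (intro CollectI exI[of _ 0]) simp

lemma Aq_eq_polys_deg_less:
  fixes P :: "'a::{field,finite} poly"
  assumes q: "odd CARD('a)" and P: "irreducible P" and P0: "poly P 0 \<noteq> 0"
    and s: "P dvd s ^ 2 + [:0, 1:]"
  shows "Aq P \<nu> = polys_deg_less (degree P * \<nu>)"
proof
  have P_nz: "P \<noteq> 0"
    using P by auto
  show "Aq P \<nu> \<subseteq> polys_deg_less (degree P * \<nu>)"
    by (rule Aq_subset[OF P_nz])
  show "polys_deg_less (degree P * \<nu>) \<subseteq> Aq P \<nu>"
  proof
    fix f :: "'a poly"
    assume f: "f \<in> polys_deg_less (degree P * \<nu>)"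
    have two: "(2::'a) \<noteq> 0"
      by (rule finite_field_two_neq_zero[OF q])
    have "\<not> P dvd s"
    proof
      assume "P dvd s"
      hence "P dvd [:0, 1:]"
        using s by (simp add: dvd_add_right_iff power2_eq_square)
      with P P0 show False
        using irreducible_dvd_X_imp_poly_0 by blast
    qed
    moreover have "P dvd - [:0, 1:] - s ^ 2"
      using s by (metis dvd_minus_iff minus_diff_eq diff_minus_eq_add)
    ultimately obtain s' where s': "P ^ \<nu> dvd - [:0, 1:] - s' ^ 2" "\<not> P dvd s'"
      using square_lift_mod_irreducible[OF P two] by blast
    obtain w where "P dvd s' * w - 1"
      using exists_inverse_mod_irreducible[OF P s'(2)] by blast
    then obtain w' where w': "P ^ \<nu> dvd s' * w' - 1"
      by (rule inverse_mod_power)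
    have "P ^ \<nu> dvd 2 * [:inverse 2:] - 1"
      using two by (simp add: numeral_poly one_pCons)
    then obtain x y where "P ^ \<nu> dvd f - (x ^ 2 + [:0, 1:] * y ^ 2)"
      using square_plus_times_square_mod[OF s'(1) w'] by blast
    thus "f \<in> Aq P \<nu>"
      by (rule Aq_memI[OF P_nz f])
  qed
qed

lemma card_Aq_chiq_one:
  fixes P :: "'a::{field,finite} poly"
  assumes q: "odd CARD('a)" and P: "irreducible P" and monic: "lead_coeff P = 1"
    and \<chi>: "chiq P = 1"
  shows "real (card (Aq P \<nu>)) = real (pnorm P) ^ \<nu>"
proof -
  have P0: "poly P 0 \<noteq> 0" and "\<exists>x. x ^ 2 = poly P 0"
    using \<chi> unfolding chiq_def by (auto split: if_splits)
  then obtain s where "P dvd s ^ 2 + [:0, 1:]"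
    using minus_X_square_mod_irreducible_iff[OF q P monic P0] by blast
  hence "Aq P \<nu> = polys_deg_less (degree P * \<nu>)"
    by (rule Aq_eq_polys_deg_less[OF q P P0])
  thus ?thesis
    by (simp add: card_polys_deg_less pnorm_def power_mult)
qed

lemma irreducible_dvd_square_plus_X_times_square:
  fixes P A B :: "'a::{field,finite} poly"
  assumes P: "irreducible P" and no_root: "\<nexists>s. P dvd s ^ 2 + [:0, 1:]"
    and dvd: "P dvd A ^ 2 + [:0, 1:] * B ^ 2"
  shows "P dvd A" "P dvd B"
proof -
  show B: "P dvd B"
  proof (rule ccontr)
    assume "\<not> P dvd B"
    then obtain w where w: "P dvd B * w - 1"
      by (rule exists_inverse_mod_irreducible[OF P])
    have "(A * w) ^ 2 + [:0, 1:] = w ^ 2 * (A ^ 2 + [:0, 1:] * B ^ 2) - [:0, 1:] * (1 + B * w) * (B * w - 1)"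
      by (simp add: algebra_simps power2_eq_square)
    also have "P dvd \<dots>"
      by (rule dvd_diff[OF dvd_mult[OF dvd] dvd_mult[OF w]])
    finally show False
      using no_root by blast
  qed
  hence "P dvd [:0, 1:] * B ^ 2"
    by (intro dvd_mult) (simp add: power2_eq_square)
  hence "P dvd A ^ 2"
    using dvd by (simp only: dvd_add_left_iff)
  thus "P dvd A"
    using P field_poly_irreducible_imp_prime prime_elem_dvd_power by blast
qed

lemma lift_X_coefficient:
  fixes P c a b :: "'a::{field,finite} poly"
  assumes P: "irreducible P" and two: "(2::'a) \<noteq> 0" and X: "\<not> P dvd [:0, 1:]"
    and rep: "P dvd c - (a ^ 2 + [:0, 1:] * b ^ 2)" and b: "\<not> P dvd b"
  obtains B where "P ^ \<nu> dvd c - (a ^ 2 + [:0, 1:] * B ^ 2)"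
proof -
  obtain w0 where "P dvd [:0, 1:] * w0 - 1"
    by (rule exists_inverse_mod_irreducible[OF P X])
  then obtain w where w_Suc: "P ^ Suc \<nu> dvd [:0, 1:] * w - 1"
    by (rule inverse_mod_power)
  have w: "P ^ \<nu> dvd [:0, 1:] * w - 1"
    using dvd_trans[OF le_imp_power_dvd[of \<nu> "Suc \<nu>" P] w_Suc] by simp
  have w1: "P dvd [:0, 1:] * w - 1"
    using dvd_trans[OF _ w_Suc, of P] by simp
  define u where "u = w * (c - a ^ 2)"
  have "u - b ^ 2 = w * (c - (a ^ 2 + [:0, 1:] * b ^ 2)) + ([:0, 1:] * w - 1) * b ^ 2"
    unfolding u_def by (simp add: algebra_simps)
  also have "P dvd \<dots>"
    by (rule dvd_add[OF dvd_mult[OF rep] dvd_mult2[OF w1]])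
  finally obtain B where B: "P ^ \<nu> dvd u - B ^ 2"
    using square_lift_mod_irreducible[OF P two _ b] by blast
  have "c - (a ^ 2 + [:0, 1:] * B ^ 2) = [:0, 1:] * (u - B ^ 2) - ([:0, 1:] * w - 1) * (c - a ^ 2)"
    unfolding u_def by (simp add: algebra_simps)
  also have "P ^ \<nu> dvd \<dots>"
    by (rule dvd_diff[OF dvd_mult[OF B] dvd_mult2[OF w]])
  finally show ?thesis
    by (rule that)
qed

lemma unit_residue_mod_power:
  fixes P c :: "'a::{field,finite} poly"
  assumes q: "odd CARD('a)" and P: "irreducible P" and monic: "lead_coeff P = 1"
    and P0: "poly P 0 \<noteq> 0" and c: "\<not> P dvd c"
  obtains A B where "P ^ \<nu> dvd c - (A ^ 2 + [:0, 1:] * B ^ 2)"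
proof -
  have two: "(2::'a) \<noteq> 0"
    by (rule finite_field_two_neq_zero[OF q])
  obtain a b where rep: "P dvd c - (a ^ 2 + [:0, 1:] * b ^ 2)"
    using square_plus_X_times_square_mod_irreducible[OF q P monic P0] by blast
  have eq: "c - (x ^ 2 + [:0, 1:] * b ^ 2) = (c - [:0, 1:] * b ^ 2) - x ^ 2" for x
    by (simp add: algebra_simps)
  show ?thesis
  proof (cases "P dvd a")
    case False
    then obtain A where "P ^ \<nu> dvd (c - [:0, 1:] * b ^ 2) - A ^ 2"
      using square_lift_mod_irreducible[OF P two rep[unfolded eq]] by blast
    thus ?thesis
      by (intro that[of A b]) (simp only: eq)
  next
    case True
    have "\<not> P dvd b"
    proof
      assume "P dvd b"
      hence "P dvd a ^ 2 + [:0, 1:] * b ^ 2"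
        using True by (intro dvd_add dvd_mult) (simp_all add: power2_eq_square)
      with rep have "P dvd c"
        by (metis dvd_add diff_add_cancel)
      with c show False ..
    qed
    moreover have "\<not> P dvd [:0, 1:]"
      using P P0 irreducible_dvd_X_imp_poly_0 by blast
    ultimately obtain B where "P ^ \<nu> dvd c - (a ^ 2 + [:0, 1:] * B ^ 2)"
      using lift_X_coefficient[OF P two _ rep] by blast
    thus ?thesis
      by (rule that)
  qed
qed

lemma times_square_mod_eq:
  fixes P :: "'a::field poly"
  shows "P ^ 2 * ((A ^ 2 + [:0, 1:] * B ^ 2) mod P ^ k) =
    ((P * A) ^ 2 + [:0, 1:] * (P * B) ^ 2) mod P ^ (k + 2)"
  by (simp add: mult_mod_right algebra_simps power2_eq_square power_add)

lemma times_square_mem_Aq: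
  fixes P :: "'a::field poly"
  assumes "g \<in> Aq P (\<nu> - 2)" "\<nu> \<ge> 1"
  shows "P ^ 2 * g \<in> Aq P \<nu>"
proof (cases "\<nu> = 1")
  case True
  hence "g = 0"
    using assms(1) by simp
  thus ?thesis
    using zero_in_Aq[of P \<nu>] by simp
next
  case False
  define k where "k = \<nu> - 2"
  have k: "\<nu> = k + 2"
    unfolding k_def using assms(2) False by arith
  obtain A B where "g = (A ^ 2 + [:0, 1:] * B ^ 2) mod P ^ k"
    using assms(1) unfolding Aq_def k by auto
  hence "P ^ 2 * g = ((P * A) ^ 2 + [:0, 1:] * (P * B) ^ 2) mod P ^ (k + 2)"
    by (simp only: times_square_mod_eq)
  thus ?thesis
    unfolding Aq_def k by blast
qed

lemma Aq_dvd_imp_times_square: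
  fixes P f :: "'a::{field,finite} poly"
  assumes P: "irreducible P" and no_root: "\<nexists>s. P dvd s ^ 2 + [:0, 1:]"
    and f: "f \<in> Aq P \<nu>" "P dvd f" and \<nu>: "\<nu> \<ge> 1"
  shows "f \<in> (\<lambda>g. P ^ 2 * g) ` Aq P (\<nu> - 2)"
proof -
  obtain A B where f_eq: "f = (A ^ 2 + [:0, 1:] * B ^ 2) mod P ^ \<nu>"
    using f(1) unfolding Aq_def by blast
  have "P dvd P ^ \<nu>"
    using \<nu> by simp
  hence "P dvd A ^ 2 + [:0, 1:] * B ^ 2"
    using f(2) f_eq dvd_mod_iff by metis
  then obtain A1 B1 where AB: "A = P * A1" "B = P * B1"
    using irreducible_dvd_square_plus_X_times_square[OF P no_root] by (metis dvdE)
  show ?thesis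
  proof (cases "\<nu> = 1")
    case True
    have "f = (P * (P * (A1 ^ 2 + [:0, 1:] * B1 ^ 2))) mod P"
      unfolding f_eq AB True by (simp add: algebra_simps power2_eq_square)
    hence "f = P ^ 2 * 0"
      by simp
    thus ?thesis
      using zero_in_Aq by blast
  next
    case False
    define k where "k = \<nu> - 2"
    have k: "\<nu> = k + 2"
      unfolding k_def using \<nu> False by arith
    have "f = P ^ 2 * ((A1 ^ 2 + [:0, 1:] * B1 ^ 2) mod P ^ k)"
      unfolding f_eq AB k times_square_mod_eq ..
    moreover have "(A1 ^ 2 + [:0, 1:] * B1 ^ 2) mod P ^ k \<in> Aq P (\<nu> - 2)"
      unfolding Aq_def k_def by blast
    ultimately show ?thesis
      by blast
  qed
qed

lemma Aq_nonsquare_decomp: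
  fixes P :: "'a::{field,finite} poly"
  assumes q: "odd CARD('a)" and P: "irreducible P" and monic: "lead_coeff P = 1"
    and P0: "poly P 0 \<noteq> 0" and no_root: "\<nexists>s. P dvd s ^ 2 + [:0, 1:]" and \<nu>: "\<nu> \<ge> 1"
  shows "Aq P \<nu> = {f \<in> polys_deg_less (degree P * \<nu>). \<not> P dvd f} \<union> (\<lambda>g. P ^ 2 * g) ` Aq P (\<nu> - 2)"
proof (intro equalityI subsetI)
  have P_nz: "P \<noteq> 0"
    using P by auto
  fix f
  assume f: "f \<in> Aq P \<nu>"
  show "f \<in> {f \<in> polys_deg_less (degree P * \<nu>). \<not> P dvd f} \<union> (\<lambda>g. P ^ 2 * g) ` Aq P (\<nu> - 2)"
    using Aq_dvd_imp_times_square[OF P no_root f _ \<nu>] Aq_subset[OF P_nz] f by blast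
next
  have P_nz: "P \<noteq> 0"
    using P by auto
  fix f
  assume "f \<in> {f \<in> polys_deg_less (degree P * \<nu>). \<not> P dvd f} \<union> (\<lambda>g. P ^ 2 * g) ` Aq P (\<nu> - 2)"
  then consider "f \<in> polys_deg_less (degree P * \<nu>)" "\<not> P dvd f" | g where "g \<in> Aq P (\<nu> - 2)" "f = P ^ 2 * g"
    by blast
  thus "f \<in> Aq P \<nu>"
  proof cases
    case 1
    then obtain A B where "P ^ \<nu> dvd f - (A ^ 2 + [:0, 1:] * B ^ 2)"
      using unit_residue_mod_power[OF q P monic P0] by blast
    thus ?thesis
      by (rule Aq_memI[OF P_nz 1(1)])
  qed (simp add: times_square_mem_Aq[OF _ \<nu>])
qed

lemma card_polys_deg_less_not_dvd:
  fixes P :: "'a::{field,finite} poly"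
  assumes "P \<noteq> 0" "\<nu> \<ge> 1"
  shows "card {f \<in> polys_deg_less (degree P * \<nu>). \<not> P dvd f} = pnorm P ^ \<nu> - pnorm P ^ (\<nu> - 1)"
proof -
  let ?D = "polys_deg_less (degree P * \<nu>) :: 'a poly set"
  have "degree P * \<nu> = degree P + degree P * (\<nu> - 1)"
    using assms(2) by (cases \<nu>) auto
  hence "{f \<in> ?D. P dvd f} = (\<lambda>g. P * g) ` polys_deg_less (degree P * (\<nu> - 1))"
    using polys_deg_less_multiples[OF assms(1)] by simp
  moreover have "inj_on (\<lambda>g. P * g) A" for A
    using assms(1) by (auto intro: inj_onI)
  ultimately have "card {f \<in> ?D. P dvd f} = pnorm P ^ (\<nu> - 1)"
    by (simp add: card_image card_polys_deg_less pnorm_def power_mult)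
  moreover have "{f \<in> ?D. \<not> P dvd f} = ?D - {f \<in> ?D. P dvd f}"
    by auto
  ultimately show ?thesis
    by (simp add: card_Diff_subset card_polys_deg_less pnorm_def power_mult)
qed

lemma card_Aq_nonsquare_rec:
  fixes P :: "'a::{field,finite} poly"
  assumes q: "odd CARD('a)" and P: "irreducible P" and monic: "lead_coeff P = 1"
    and P0: "poly P 0 \<noteq> 0" and no_root: "\<nexists>s. P dvd s ^ 2 + [:0, 1:]" and \<nu>: "\<nu> \<ge> 1"
  shows "card (Aq P \<nu>) = (pnorm P ^ \<nu> - pnorm P ^ (\<nu> - 1)) + card (Aq P (\<nu> - 2))"
proof -
  have P_nz: "P \<noteq> 0"
    using P by auto
  have "inj_on (\<lambda>g. P ^ 2 * g) A" for A
    using P_nz by (auto intro: inj_onI)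
  moreover have "{f \<in> polys_deg_less (degree P * \<nu>). \<not> P dvd f} \<inter> (\<lambda>g. P ^ 2 * g) ` Aq P (\<nu> - 2) = {}"
    by (auto simp: power2_eq_square)
  ultimately show ?thesis
    unfolding Aq_nonsquare_decomp[OF assms]
    by (simp add: card_Un_disjoint finite_Aq[OF P_nz] card_image card_polys_deg_less_not_dvd[OF P_nz \<nu>])
qed

lemma two_step_recurrence_closed_form:
  fixes c :: "nat \<Rightarrow> nat" and Q :: nat
  assumes c0: "c 0 = 1" and Q: "Q \<ge> 1"
    and rec: "\<And>k. k \<ge> 1 \<Longrightarrow> c k = (Q ^ k - Q ^ (k - 1)) + c (k - 2)"
  shows "(real Q + 1) * real (c n) = real Q ^ (n + 1) + (if odd n then real Q else 1)"
proof (induction n rule: less_induct)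
  case (less n)
  show ?case
  proof (cases n)
    case (Suc m)
    have "c n = (Q ^ n - Q ^ m) + c (n - 2)"
      using rec[of n] Suc by simp
    moreover have "Q ^ m \<le> Q ^ n"
      using Q Suc by (simp add: power_increasing)
    ultimately have cn: "real (c n) = real Q ^ n - real Q ^ m + real (c (n - 2))"
      by (simp only: of_nat_add of_nat_diff of_nat_power)
    show ?thesis
    proof (cases m)
      case 0
      thus ?thesis
        using cn Suc c0 by (simp add: algebra_simps)
    next
      case (Suc k)
      have n: "n = Suc (Suc k)"
        using \<open>n = Suc m\<close> Suc by simp
      have "(real Q + 1) * real (c n) = (real Q + 1) * (real Q ^ n - real Q ^ m) + (real Q + 1) * real (c k)"
        using cn n by (simp add: distrib_left)
      also have "(real Q + 1) * (real Q ^ n - real Q ^ m) = real Q ^ (n + 1) - real Q ^ (k + 1)"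
        using n Suc by (simp add: algebra_simps)
      also have "(real Q + 1) * real (c k) = real Q ^ (k + 1) + (if odd k then real Q else 1)"
        using less.IH[of k] n by simp
      finally show ?thesis
        using n by simp
    qed
  qed (simp add: c0)
qed

lemma card_Aq_chiq_minus_one:
  fixes P :: "'a::{field,finite} poly"
  assumes q: "odd CARD('a)" and P: "irreducible P" and monic: "lead_coeff P = 1"
    and \<chi>: "chiq P = -1"
  shows "real (card (Aq P \<nu>)) =
    (if odd \<nu>
     then real (pnorm P) ^ \<nu> * (1 - 1 / (real (pnorm P) + 1)) + real (pnorm P) / (real (pnorm P) + 1)
     else real (pnorm P) ^ \<nu> * (1 - 1 / (real (pnorm P) + 1)) + 1 / (real (pnorm P) + 1))"
proof -
  have P0: "poly P 0 \<noteq> 0" and "\<nexists>x. x ^ 2 = poly P 0"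
    using \<chi> unfolding chiq_def by (auto split: if_splits)
  hence no_root: "\<nexists>s. P dvd s ^ 2 + [:0, 1:]"
    using minus_X_square_mod_irreducible_iff[OF q P monic P0] by blast
  let ?Q = "real (pnorm P)"
  have "(?Q + 1) * real (card (Aq P \<nu>)) = ?Q ^ (\<nu> + 1) + (if odd \<nu> then ?Q else 1)"
    by (rule two_step_recurrence_closed_form)
      (use card_Aq_nonsquare_rec[OF q P monic P0 no_root] in \<open>simp_all add: pnorm_def Suc_leI\<close>)
  moreover have "?Q + 1 > 0"
    by simp
  ultimately have "real (card (Aq P \<nu>)) = (?Q ^ (\<nu> + 1) + (if odd \<nu> then ?Q else 1)) / (?Q + 1)"
    by (simp add: eq_divide_eq mult.commute del: of_nat_add)
  hence "real (card (Aq P \<nu>)) = ?Q ^ (\<nu> + 1) / (?Q + 1) + (if odd \<nu> then ?Q else 1) / (?Q + 1)"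
    by (simp only: add_divide_distrib)
  moreover have "?Q ^ \<nu> * (1 - 1 / (?Q + 1)) = ?Q ^ (\<nu> + 1) / (?Q + 1)"
    using \<open>?Q + 1 > 0\<close> by (simp add: field_simps)
  ultimately show ?thesis
    by simp
qed

lemma Aq_X_Suc:
  assumes q: "odd CARD('a::{field,finite})"
  shows "Aq [:0, 1:] (Suc n) =
    {f \<in> polys_deg_less (Suc n). coeff f 0 \<in> {c :: 'a. c \<noteq> 0 \<and> (\<exists>x. x ^ 2 = c)}} \<union>
    (\<lambda>g. [:0, 1:] * g) ` Aq [:0, 1:] n"
  (is "?A = ?S \<union> ?T")
proof (intro equalityI subsetI)
  fix f assume f: "f \<in> ?A"
  then obtain A B where f_eq: "f = (A ^ 2 + [:0, 1:] * B ^ 2) mod [:0, 1:] ^ Suc n"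
    unfolding Aq_def by blast
  have "f \<in> polys_deg_less (Suc n)"
    using Aq_subset[of "[:0, 1 :: 'a:]"] f by auto
  moreover have "coeff f 0 = poly A 0 ^ 2"
    unfolding f_eq by (simp add: poly_0_coeff_0[symmetric] poly_mod_eq_at_root)
  ultimately show "f \<in> ?S \<union> ?T"
  proof (cases "poly A 0 = 0")
    case True
    hence "[:0, 1:] dvd A"
      by (simp add: dvd_iff_poly_eq_0)
    then obtain A1 where "A = [:0, 1:] * A1"
      by (rule dvdE)
    hence "f = [:0, 1:] * ((B ^ 2 + [:0, 1:] * A1 ^ 2) mod [:0, 1:] ^ n)"
      unfolding f_eq by (simp add: mult_mod_right algebra_simps power2_eq_square)
    moreover have "(B ^ 2 + [:0, 1:] * A1 ^ 2) mod [:0, 1:] ^ n \<in> Aq [:0, 1:] n"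
      unfolding Aq_def by blast
    ultimately show ?thesis
      by blast
  qed auto
next
  fix f assume "f \<in> ?S \<union> ?T"
  thus "f \<in> ?A"
  proof
    assume "f \<in> ?S"
    then obtain x where f: "f \<in> polys_deg_less (Suc n)" "coeff f 0 \<noteq> 0" "x ^ 2 = coeff f 0"
      by auto
    have "x \<noteq> 0" "poly f 0 = x ^ 2"
      using f(2,3) by (auto simp: poly_0_coeff_0)
    hence root: "[:0, 1:] dvd f - [:x:] ^ 2" and unit: "\<not> [:0, 1:] dvd [:x:]"
      using dvd_iff_poly_eq_0[of 0 "f - [:x:] ^ 2"] dvd_iff_poly_eq_0[of 0 "[:x:]"] by simp_all
    have "irreducible ([:0, 1:] :: 'a poly)"
      by (rule irreducible_linear_field_poly) simp
    then obtain A where "[:0, 1:] ^ Suc n dvd f - A ^ 2"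
      using square_lift_mod_irreducible[OF _ finite_field_two_neq_zero[OF q] root unit] by blast
    hence "[:0, 1:] ^ Suc n dvd f - (A ^ 2 + [:0, 1:] * 0 ^ 2)"
      by simp
    thus "f \<in> ?A"
      by (rule Aq_memI[of "[:0, 1:]" f "Suc n", rotated 2]) (use f(1) in simp_all)
  next
    assume "f \<in> ?T"
    then obtain A B where "f = [:0, 1:] * ((A ^ 2 + [:0, 1:] * B ^ 2) mod [:0, 1:] ^ n)"
      unfolding Aq_def by blast
    hence "f = (([:0, 1:] * B) ^ 2 + [:0, 1:] * A ^ 2) mod [:0, 1:] ^ Suc n"
      by (simp add: mult_mod_right algebra_simps power2_eq_square)
    thus "f \<in> ?A"
      unfolding Aq_def by blast
  qed
qed

lemma card_Aq_X:
  assumes q: "odd CARD('a::{field,finite})"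
  shows "2 * card (Aq ([:0, 1:] :: 'a poly) n) = CARD('a) ^ n + 1"
proof (induction n)
  case (Suc n)
  let ?S = "{f \<in> polys_deg_less (Suc n). coeff f 0 \<in> {c :: 'a. c \<noteq> 0 \<and> (\<exists>x. x ^ 2 = c)}}"
  let ?T = "(\<lambda>g. [:0, 1:] * g) ` Aq ([:0, 1 :: 'a:]) n"
  have "?S \<inter> ?T = {}"
    by auto
  moreover have "finite ?S" "finite ?T"
    by (simp_all add: finite_Aq)
  moreover have "card ?T = card (Aq ([:0, 1 :: 'a:]) n)"
    by (rule card_image) (auto intro: inj_onI)
  moreover have "2 * card ?S = (CARD('a) - 1) * CARD('a) ^ n"
    unfolding card_polys_deg_less_Suc_coeff_0 card_polys_deg_less card_finite_field_nonzero_squares[OF q]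
    using q by simp
  ultimately have "2 * card (Aq ([:0, 1 :: 'a:]) (Suc n)) = (CARD('a) - 1) * CARD('a) ^ n + (CARD('a) ^ n + 1)"
    using Suc by (simp add: Aq_X_Suc[OF q] card_Un_disjoint)
  also have "\<dots> = CARD('a) ^ Suc n + 1"
    using finite_UNIV_card_ge_0[where 'a = 'a] by (cases "CARD('a)") simp_all
  finally show ?case .
qed simp

lemma card_Aq_chiq_zero:
  fixes P :: "'a::{field,finite} poly"
  assumes q: "odd CARD('a)" and P: "irreducible P" and monic: "lead_coeff P = 1"
    and \<chi>: "chiq P = 0"
  shows "real (card (Aq P \<nu>)) = (real (pnorm P) ^ \<nu> + 1) / 2"
proof -
  have "P = [:0, 1:]"
    using \<chi> by (intro irreducible_poly_0_eq_X[OF P monic]) (auto simp: chiq_def split: if_splits)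
  hence "2 * card (Aq P \<nu>) = pnorm P ^ \<nu> + 1"
    using card_Aq_X[OF q] by (simp add: pnorm_def)
  hence "2 * real (card (Aq P \<nu>)) = real (pnorm P) ^ \<nu> + 1"
    by (metis of_nat_1 of_nat_add of_nat_mult of_nat_numeral of_nat_power)
  thus ?thesis
    by simp
qed

theorem mainTheorem9:
  fixes P :: "'a::{field,finite} poly" and \<nu> :: nat
  assumes "odd CARD('a)"
    and "lead_coeff P = 1" and "irreducible P"
    and "\<nu> \<ge> 1"
  shows "(chiq P = -1 \<longrightarrow>
            real (card (Aq P \<nu>)) =
              (if odd \<nu>
               then real (pnorm P) ^ \<nu> * (1 - 1 / (real (pnorm P) + 1)) + real (pnorm P) / (real (pnorm P) + 1)
               else real (pnorm P) ^ \<nu> * (1 - 1 / (real (pnorm P) + 1)) + 1 / (real (pnorm P) + 1)))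
       \<and> (chiq P = 0 \<longrightarrow> real (card (Aq P \<nu>)) = (real (pnorm P) ^ \<nu> + 1) / 2)
       \<and> (chiq P = 1 \<longrightarrow> real (card (Aq P \<nu>)) = real (pnorm P) ^ \<nu>)"
  using card_Aq_chiq_minus_one[OF assms(1,3,2)] card_Aq_chiq_zero[OF assms(1,3,2)]
    card_Aq_chiq_one[OF assms(1,3,2)]
  by blast

end
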